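(* For every smooth $u:[0,1]\to\mathbb R$, every integer $m\ge1$, every integer $k\ge1$ and every $A\in\mathcal P_k$, $$\|Au\|_{L^\infty(0,1)}^2\lesssim\sum_{j=1}^2\sum_{B\in\mathcal P_{j+k}}\int_0^{3/4}(Bu)^2r^2\,dr+\sum_{j=0}^{m+1}\sum_{B\in\mathcal P_{j+k}}\int_{1/4}^1d^{2m}(Bu)^2\,dr.$$
   Context: $\bar\rho=\phi$ with $\phi\in C^k[0,1]$ (k large), $\phi>0$, $\phi'(0)=0$, $\gamma>1$, and $d(r)=\bar\rho(r)^{-\gamma}\int_r^1\ell\bar\rho(\ell)\,d\ell$. $D_rf=r^{-2}\partial_r(r^2f)$. Vector-field classes: $\mathcal P_0=\{1\}$; for $j\ge0$, $\mathcal P_{2j+2}=\{\prod_{k=1}^{j+1}\partial_rV_k: V_k\in\{D_r,\tfrac1r\}\}$ and $\mathcal P_{2j+1}=\{V_{j+1}\prod_{k=1}^{j}\partial_rV_k:V_k\in\{D_r,\tfrac1r\}\}$, where $\frac1r$ denotes multiplication by $1/r$ and products denote compositions of operators. *)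

theory Defs
  imports "HOL-Analysis.Analysis"
begin

(* C^n on a set S (one-sided derivatives at boundary points of S, last derivative continuous) *)
definition Ck_on :: "nat \<Rightarrow> real set \<Rightarrow> (real \<Rightarrow> real) \<Rightarrow> bool" where
  "Ck_on n S f \<longleftrightarrow> (\<exists>g :: nat \<Rightarrow> real \<Rightarrow> real. g 0 = f \<and>
      (\<forall>j<n. \<forall>x\<in>S. (g j has_real_derivative g (Suc j) x) (at x within S)) \<and>
      continuous_on S (g n))"

definition smooth_on :: "real set \<Rightarrow> (real \<Rightarrow> real) \<Rightarrow> bool" where
  "smooth_on S f \<longleftrightarrow> (\<forall>n. Ck_on n S f)"

definition dfun :: "(real \<Rightarrow> real) \<Rightarrow> real \<Rightarrow> real \<Rightarrow> real" where
  "dfun \<phi> \<gamma> r = \<phi> r powr (-\<gamma>) * integral {r..1} (\<lambda>l. l * \<phi> l)"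

definition dr_op :: "(real \<Rightarrow> real) \<Rightarrow> real \<Rightarrow> real" where
  "dr_op f = (\<lambda>r. deriv f r)"

definition Dr_op :: "(real \<Rightarrow> real) \<Rightarrow> real \<Rightarrow> real" where
  "Dr_op f = (\<lambda>r. deriv (\<lambda>s. s\<^sup>2 * f s) r / r\<^sup>2)"

definition Inv_op :: "(real \<Rightarrow> real) \<Rightarrow> real \<Rightarrow> real" where
  "Inv_op f = (\<lambda>r. f r / r)"

datatype vfield = VDr | VInv

fun vop :: "vfield \<Rightarrow> (real \<Rightarrow> real) \<Rightarrow> real \<Rightarrow> real" where
  "vop VDr = Dr_op"
| "vop VInv = Inv_op"

fun even_op :: "vfield list \<Rightarrow> (real \<Rightarrow> real) \<Rightarrow> real \<Rightarrow> real" where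
  "even_op [] = id"
| "even_op (v # vs) = dr_op \<circ> vop v \<circ> even_op vs"

definition Pclass :: "nat \<Rightarrow> ((real \<Rightarrow> real) \<Rightarrow> real \<Rightarrow> real) set" where
  "Pclass n = (if even n then {even_op vs | vs. length vs = n div 2}
               else {vop v \<circ> even_op vs | v vs. length vs = n div 2})"

end

theory Submission
  imports Defs
begin

text \<open>
  Alternately applying D_r and d/dr to A u produces a chain
  h_0 = A u, h_1, h_2, ... with h_j in P_(k+j), and D_r f = f' + 2 f / r gives
  h_j' = h_(j+1) + \<beta>_j h_j with \<beta>_j = -2/r or 0, so \<bar>\<beta>_j\<bar> \<le> 8 away from 0.

  Near r = 1 the weight d is comparable to 1 - r. Differentiating (1 - r)^(n+1) h_j^2 gives a
  Hardy inequality that trades two powers of the weight for one more member of the chain;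
  after m steps h_0 and h_1 are bounded in unweighted L^2 near 1, and the fundamental theorem
  of calculus bounds h_0 pointwise there.

  Near r = 0 the weight r^2 is used. For even k write A u = r g with g = (1/r) A u in P_(k+1),
  and integrate (r g^2)' \<ge> -r^2 g'^2, where g' lies in P_(k+2). For odd k, (A u)' = r ((1/r)(A u)')
  with (1/r)(A u)' in P_(k+2). In both cases the starting value is taken at a point of
  [1/2, 3/4] where the square of the function does not exceed its mean.
\<close>

section \<open>Iterated derivatives on open sets\<close>

text \<open>The operators of Defs are built from the two-sided derivative deriv, so regularity is
  tracked through iterated deriv on an open set.\<close>

fun deriv_Ck :: "nat \<Rightarrow> real set \<Rightarrow> (real \<Rightarrow> real) \<Rightarrow> bool" where
  "deriv_Ck 0 S g \<longleftrightarrow> True"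
| "deriv_Ck (Suc n) S g \<longleftrightarrow> (\<forall>x\<in>S. g differentiable (at x)) \<and> deriv_Ck n S (deriv g)"

definition deriv_smooth :: "real set \<Rightarrow> (real \<Rightarrow> real) \<Rightarrow> bool" where
  "deriv_smooth S g \<longleftrightarrow> (\<forall>n. deriv_Ck n S g)"

lemma deriv_Ck_cong:
  assumes "open S" "\<And>x. x \<in> S \<Longrightarrow> g x = p x" "deriv_Ck n S g"
  shows "deriv_Ck n S p"
  using assms(2,3)
proof (induction n arbitrary: g p)
  case (Suc n)
  have ev: "eventually (\<lambda>y. g y = p y) (nhds x)" if "x \<in> S" for x
    using eventually_nhds_in_open[OF \<open>open S\<close> that] Suc.prems(1) by (auto elim: eventually_mono)
  have "p differentiable (at x)" if x: "x \<in> S" for x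
  proof -
    obtain D where "(g has_field_derivative D) (at x)"
      using x Suc.prems(2) real_differentiable_def by auto
    moreover have "(g has_field_derivative D) (at x) = (p has_field_derivative D) (at x)"
      using ev[OF x] Suc.prems(1)[OF x] by (intro has_field_derivative_cong_ev) auto
    ultimately show ?thesis using real_differentiable_def by blast
  qed
  moreover have "deriv_Ck n S (deriv p)"
    using Suc.IH[of "deriv g" "deriv p"] ev Suc.prems(2) by (simp add: deriv_cong_ev)
  ultimately show ?case by simp
qed simp

lemma deriv_Ck_const: "deriv_Ck n S (\<lambda>x. c)"
  by (induction n arbitrary: c) simp_all

lemma deriv_Ck_ident: "deriv_Ck n S (\<lambda>x. x)"
  by (cases n) (simp_all add: deriv_Ck_const)

lemma deriv_Ck_add:
  "open S \<Longrightarrow> deriv_Ck n S g \<Longrightarrow> deriv_Ck n S p \<Longrightarrow> deriv_Ck n S (\<lambda>x. g x + p x)"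
proof (induction n arbitrary: g p)
  case (Suc n)
  have "deriv (\<lambda>x. g x + p x) x = deriv g x + deriv p x" if "x \<in> S" for x
    using Suc.prems that by (intro deriv_add) (auto simp: real_differentiable_def field_differentiable_def)
  then show ?case using Suc by (auto intro: deriv_Ck_cong)
qed simp

lemma deriv_Ck_mult:
  "open S \<Longrightarrow> deriv_Ck n S g \<Longrightarrow> deriv_Ck n S p \<Longrightarrow> deriv_Ck n S (\<lambda>x. g x * p x)"
proof (induction n arbitrary: g p)
  case (Suc n)
  have deriv_mult_eq: "deriv (\<lambda>x. g x * p x) x = deriv g x * p x + g x * deriv p x" if "x \<in> S" for x
    using Suc.prems that deriv_mult[of g x p] by (auto simp: real_differentiable_def field_differentiable_def)
  have Ck_le: "deriv_Ck n S f" if "deriv_Ck (Suc n) S f" for f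
    using that by (induction n arbitrary: f) auto
  have "deriv_Ck n S (\<lambda>x. deriv g x * p x + g x * deriv p x)"
    using Suc Ck_le by (intro deriv_Ck_add) auto
  then show ?case using Suc.prems deriv_mult_eq by (auto intro: deriv_Ck_cong)
qed simp

lemma deriv_Ck_inverse_power:
  assumes "open S" "0 \<notin> S"
  shows "deriv_Ck n S (\<lambda>x. inverse x ^ k)"
proof (induction n arbitrary: k)
  case (Suc n)
  have D: "((\<lambda>x. inverse x ^ k) has_field_derivative - real k * inverse x ^ Suc k) (at x)"
    if "x \<in> S" for x
  proof -
    have "x \<noteq> 0" using that assms(2) by auto
    then have "((\<lambda>x. inverse x ^ k) has_field_derivative
        real k * (- (inverse x ^ Suc (Suc 0)) * inverse x ^ (k - Suc 0))) (at x)"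
      by (intro DERIV_power DERIV_inverse)
    then show ?thesis by (cases k) (simp_all add: algebra_simps)
  qed
  have "deriv_Ck n S (\<lambda>x. - real k * inverse x ^ Suc k)"
    using Suc.IH assms(1) by (intro deriv_Ck_mult deriv_Ck_const)
  then have "deriv_Ck n S (deriv (\<lambda>x. inverse x ^ k))"
    by (rule deriv_Ck_cong[OF assms(1), rotated]) (simp add: DERIV_imp_deriv[OF D])
  with D show ?case by (auto simp: real_differentiable_def)
qed simp

lemma deriv_smooth_deriv: "deriv_smooth S g \<Longrightarrow> deriv_smooth S (deriv g)"
  unfolding deriv_smooth_def using deriv_Ck.simps(2) by blast

lemma deriv_smooth_has_derivative:
  "deriv_smooth S g \<Longrightarrow> x \<in> S \<Longrightarrow> (g has_real_derivative deriv g x) (at x)"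
  unfolding deriv_smooth_def using deriv_Ck.simps(2)[of 0 S g]
  by (auto simp: DERIV_deriv_iff_real_differentiable)

lemma deriv_smooth_continuous_on: "deriv_smooth S g \<Longrightarrow> continuous_on S g"
  by (intro continuous_at_imp_continuous_on ballI DERIV_isCont[OF deriv_smooth_has_derivative])

lemma deriv_smooth_mult:
  "open S \<Longrightarrow> deriv_smooth S g \<Longrightarrow> deriv_smooth S p \<Longrightarrow> deriv_smooth S (\<lambda>x. g x * p x)"
  unfolding deriv_smooth_def using deriv_Ck_mult by blast

lemma deriv_smooth_inverse_power: "open S \<Longrightarrow> 0 \<notin> S \<Longrightarrow> deriv_smooth S (\<lambda>x. inverse x ^ k)"
  unfolding deriv_smooth_def using deriv_Ck_inverse_power by blast

lemma deriv_smooth_Inv_op: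
  assumes "open S" "0 \<notin> S" "deriv_smooth S g"
  shows "deriv_smooth S (Inv_op g)"
proof -
  have "deriv_smooth S (\<lambda>x. g x * inverse x ^ 1)"
    by (rule deriv_smooth_mult[OF assms(1,3) deriv_smooth_inverse_power[OF assms(1,2)]])
  then show ?thesis by (simp add: Inv_op_def divide_inverse)
qed

lemma deriv_smooth_Dr_op:
  assumes "open S" "0 \<notin> S" "deriv_smooth S g"
  shows "deriv_smooth S (Dr_op g)"
proof -
  have "deriv_smooth S (\<lambda>s. s)"
    by (simp add: deriv_smooth_def deriv_Ck_ident)
  then have "deriv_smooth S (\<lambda>s. s * (s * g s))"
    using deriv_smooth_mult[OF assms(1)] assms(3) by blast
  then have "deriv_smooth S (deriv (\<lambda>s. s\<^sup>2 * g s))"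
    by (simp add: deriv_smooth_deriv power2_eq_square mult.assoc)
  then have "deriv_smooth S (\<lambda>x. deriv (\<lambda>s. s\<^sup>2 * g s) x * inverse x ^ 2)"
    by (rule deriv_smooth_mult[OF assms(1) _ deriv_smooth_inverse_power[OF assms(1,2)]])
  then show ?thesis by (simp add: Dr_op_def divide_inverse power_inverse)
qed

lemma deriv_smooth_vop:
  "open S \<Longrightarrow> 0 \<notin> S \<Longrightarrow> deriv_smooth S g \<Longrightarrow> deriv_smooth S (vop v g)"
  by (cases v) (auto intro: deriv_smooth_Dr_op deriv_smooth_Inv_op)

lemma deriv_smooth_even_op:
  "open S \<Longrightarrow> 0 \<notin> S \<Longrightarrow> deriv_smooth S g \<Longrightarrow> deriv_smooth S (even_op vs g)"
  by (induction vs) (auto intro: deriv_smooth_vop deriv_smooth_deriv simp: dr_op_def)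

lemma Dr_op_eq:
  assumes "deriv_smooth S g" "x \<in> S" "x \<noteq> 0"
  shows "Dr_op g x = deriv g x + 2 * g x / x"
proof -
  have "((\<lambda>s. s\<^sup>2 * g s) has_real_derivative 2 * x * g x + x\<^sup>2 * deriv g x) (at x)"
    using deriv_smooth_has_derivative[OF assms(1,2)] by (auto intro!: derivative_eq_intros)
  then have "deriv (\<lambda>s. s\<^sup>2 * g s) x = 2 * x * g x + x\<^sup>2 * deriv g x"
    by (rule DERIV_imp_deriv)
  then show ?thesis
    using assms(3) by (simp add: Dr_op_def field_simps power2_eq_square)
qed

lemma smooth_on_imp_deriv_smooth:
  assumes "smooth_on {a..b} u"
  shows "deriv_smooth {a<..<b} u"
  unfolding deriv_smooth_def
proof
  fix n
  have "Ck_on n {a..b} u"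
    using assms by (simp add: smooth_on_def)
  then obtain g where g0: "g 0 = u" and
    g: "\<And>j x. j < n \<Longrightarrow> x \<in> {a..b} \<Longrightarrow> (g j has_real_derivative g (Suc j) x) (at x within {a..b})"
    unfolding Ck_on_def by blast
  have g_at: "(g j has_real_derivative g (Suc j) x) (at x)" if "j < n" "x \<in> {a<..<b}" for j x
    using g[OF that(1), of x] that(2) at_within_Icc_at[of a x b] by simp
  have "deriv_Ck i {a<..<b} (g j)" if "j + i \<le> n" for i j
    using that
  proof (induction i arbitrary: j)
    case (Suc i)
    have "g (Suc j) x = deriv (g j) x" if "x \<in> {a<..<b}" for x
      using g_at[of j x] Suc.prems that by (simp add: DERIV_imp_deriv)
    moreover have "deriv_Ck i {a<..<b} (g (Suc j))"
      using Suc by simp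
    ultimately have "deriv_Ck i {a<..<b} (deriv (g j))"
      by (intro deriv_Ck_cong[of _ "g (Suc j)" "deriv (g j)"]) auto
    moreover have "\<forall>x\<in>{a<..<b}. g j differentiable (at x)"
      using g_at[of j] Suc.prems unfolding real_differentiable_def by fastforce
    ultimately show ?case by simp
  qed simp
  from this[of 0 n] show "deriv_Ck n {a<..<b} u" using g0 by simp
qed

section \<open>The classes P_n and the derivative chain\<close>

lemma finite_Pclass: "finite (Pclass n)"
proof -
  have "(UNIV :: vfield set) = {VDr, VInv}"
    using vfield.exhaust by auto
  then have "finite (UNIV :: vfield set)"
    by (metis finite.emptyI finite.insertI)
  then have "finite ((UNIV :: vfield set) \<times> {vs :: vfield list. length vs = n div 2})"
    "finite {vs :: vfield list. length vs = n div 2}"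
    using finite_lists_length_eq[of "UNIV :: vfield set" "n div 2"] by simp_all
  moreover have "{vop v \<circ> even_op vs | v vs. length vs = n div 2}
      = (\<lambda>(v, vs). vop v \<circ> even_op vs) ` (UNIV \<times> {vs. length vs = n div 2})"
    "{even_op vs | vs. length vs = n div 2} = even_op ` {vs. length vs = n div 2}"
    by auto
  ultimately show ?thesis
    unfolding Pclass_def by auto
qed

lemma Pclass_vop_comp: "even n \<Longrightarrow> B \<in> Pclass n \<Longrightarrow> vop v \<circ> B \<in> Pclass (Suc n)"
  unfolding Pclass_def by auto

lemma Pclass_dr_op_comp: "odd n \<Longrightarrow> B \<in> Pclass n \<Longrightarrow> dr_op \<circ> B \<in> Pclass (Suc n)"
proof -
  assume "odd n" "B \<in> Pclass n"
  then obtain v vs where "B = vop v \<circ> even_op vs" "length vs = n div 2"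
    unfolding Pclass_def by auto
  moreover have "Suc n div 2 = Suc (n div 2)"
    using \<open>odd n\<close> by presburger
  ultimately have "dr_op \<circ> B = even_op (v # vs)" "length (v # vs) = Suc n div 2"
    by (auto simp: comp_assoc)
  then have "\<exists>ws. dr_op \<circ> B = even_op ws \<and> length ws = Suc n div 2"
    by blast
  then show ?thesis
    using \<open>odd n\<close> by (simp add: Pclass_def)
qed

lemma deriv_smooth_Pclass:
  assumes "open S" "0 \<notin> S" "deriv_smooth S u" "B \<in> Pclass n"
  shows "deriv_smooth S (B u)"
proof -
  have even_op: "deriv_smooth S (even_op vs u)" for vs
    using assms(1-3) by (rule deriv_smooth_even_op)
  show ?thesis
  proof (cases "even n")
    case True
    then show ?thesis using assms(4) even_op unfolding Pclass_def by auto
  next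
    case False
    then obtain v vs where "B = vop v \<circ> even_op vs"
      using assms(4) unfolding Pclass_def by auto
    then show ?thesis
      using deriv_smooth_vop[OF assms(1,2) even_op] by simp
  qed
qed

fun Pchain :: "nat \<Rightarrow> ((real \<Rightarrow> real) \<Rightarrow> real \<Rightarrow> real) \<Rightarrow> nat \<Rightarrow> (real \<Rightarrow> real) \<Rightarrow> real \<Rightarrow> real"
  where
  "Pchain k A 0 = A"
| "Pchain k A (Suc j) = (if even (j + k) then Dr_op else dr_op) \<circ> Pchain k A j"

definition chain_coeff :: "nat \<Rightarrow> real \<Rightarrow> real" where
  "chain_coeff n x = (if even n then - 2 / x else 0)"

lemma Pchain_Pclass: "A \<in> Pclass k \<Longrightarrow> Pchain k A j \<in> Pclass (j + k)"
proof (induction j)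
  case (Suc j)
  show ?case
  proof (cases "even (j + k)")
    case True
    then show ?thesis
      using Pclass_vop_comp[OF True Suc.IH[OF Suc.prems], of VDr] by (simp add: o_def)
  next
    case False
    then show ?thesis
      using Pclass_dr_op_comp[OF False Suc.IH[OF Suc.prems]] by (simp add: o_def)
  qed
qed simp

lemma deriv_smooth_Pchain:
  assumes "open S" "0 \<notin> S" "deriv_smooth S (A u)"
  shows "deriv_smooth S (Pchain k A j u)"
proof (induction j)
  case (Suc j)
  then show ?case
    using deriv_smooth_Dr_op[OF assms(1,2)] deriv_smooth_deriv by (simp add: dr_op_def)
qed (simp add: assms(3))

lemma Pchain_has_derivative:
  assumes "open S" "0 \<notin> S" "deriv_smooth S (A u)" "x \<in> S"
  shows "(Pchain k A j u has_real_derivative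
           Pchain k A (Suc j) u x + chain_coeff (j + k) x * Pchain k A j u x) (at x)"
proof -
  have smooth: "deriv_smooth S (Pchain k A j u)"
    using assms(1-3) by (rule deriv_smooth_Pchain)
  have "x \<noteq> 0"
    using assms(2,4) by auto
  then have "Pchain k A (Suc j) u x + chain_coeff (j + k) x * Pchain k A j u x
      = deriv (Pchain k A j u) x"
    using Dr_op_eq[OF smooth assms(4)] by (simp add: chain_coeff_def dr_op_def)
  then show ?thesis
    using deriv_smooth_has_derivative[OF smooth assms(4)] by simp
qed

lemma abs_chain_coeff_le: "1/4 \<le> x \<Longrightarrow> \<bar>chain_coeff n x\<bar> \<le> 8"
  by (auto simp: chain_coeff_def field_simps)

lemma continuous_on_closed_subinterval:
  "continuous_on {a<..<b} g \<Longrightarrow> a < c \<Longrightarrow> d < b \<Longrightarrow> continuous_on {c..d} (g :: real \<Rightarrow> real)"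
  by (erule continuous_on_subset) auto

lemma increment_has_integral:
  fixes F F' :: "real \<Rightarrow> real"
  assumes "a \<le> b" "\<And>x. x \<in> {a..b} \<Longrightarrow> (F has_real_derivative F' x) (at x)"
  shows "(F' has_integral (F b - F a)) {a..b}"
  using assms(1)
proof (rule fundamental_theorem_of_calculus)
  fix x assume "x \<in> {a..b}"
  then show "(F has_vector_derivative F' x) (at x within {a..b})"
    using assms(2) has_field_derivative_at_within has_real_derivative_iff_has_vector_derivative
    by blast
qed

lemma integral_le_increment:
  fixes F F' G :: "real \<Rightarrow> real"
  assumes "a \<le> b" "\<And>x. x \<in> {a..b} \<Longrightarrow> (F has_real_derivative F' x) (at x)"
    "continuous_on {a..b} G" "\<And>x. x \<in> {a..b} \<Longrightarrow> G x \<le> F' x"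
  shows "integral {a..b} G \<le> F b - F a"
  using has_integral_le[OF integrable_integral increment_has_integral[OF assms(1,2)]]
    integrable_continuous_interval[OF assms(3)] assms(4) by blast

lemma increment_le_integral:
  fixes F F' G :: "real \<Rightarrow> real"
  assumes "a \<le> b" "\<And>x. x \<in> {a..b} \<Longrightarrow> (F has_real_derivative F' x) (at x)"
    "continuous_on {a..b} G" "\<And>x. x \<in> {a..b} \<Longrightarrow> F' x \<le> G x"
  shows "F b - F a \<le> integral {a..b} G"
  using has_integral_le[OF increment_has_integral[OF assms(1,2)] integrable_integral]
    integrable_continuous_interval[OF assms(3)] assms(4) by blast

lemma exists_sq_le_mean:
  fixes g :: "real \<Rightarrow> real"
  assumes "a < b" "continuous_on {a..b} g"
  obtains s where "s \<in> {a..b}" "(b - a) * (g s)\<^sup>2 \<le> integral {a..b} (\<lambda>x. (g x)\<^sup>2)"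
proof -
  have cont: "continuous_on {a..b} (\<lambda>x. (g x)\<^sup>2)"
    using assms(2) by (intro continuous_intros)
  obtain s where s: "s \<in> {a..b}" "\<And>y. y \<in> {a..b} \<Longrightarrow> (g s)\<^sup>2 \<le> (g y)\<^sup>2"
    using continuous_attains_inf[OF _ _ cont] assms(1) by auto
  have "integral {a..b} (\<lambda>x. (g s)\<^sup>2) \<le> integral {a..b} (\<lambda>x. (g x)\<^sup>2)"
    using s cont by (intro integral_le integrable_continuous_interval) auto
  then show ?thesis
    using that s assms(1) by simp
qed

lemma integral_subinterval_le:
  fixes F :: "real \<Rightarrow> real"
  assumes "a \<le> c" "d \<le> b" "continuous_on {a..b} F" "\<And>x. x \<in> {a..b} \<Longrightarrow> 0 \<le> F x"
  shows "integral {c..d} F \<le> integral {a..b} F"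
proof -
  have int: "F integrable_on {a..b}"
    using assms(3) integrable_continuous_interval by blast
  show ?thesis
  proof (cases "c \<le> d")
    case True
    then have "{c..d} \<subseteq> {a..b}"
      using assms(1,2) by auto
    then show ?thesis
      using integral_subset_le int integrable_on_subinterval assms(4) by blast
  next
    case False
    then show ?thesis
      using integral_nonneg[OF int] assms(4) by simp
  qed
qed

lemma integral_le_of_nn_integral_le:
  fixes F G :: "real \<Rightarrow> real"
  assumes "continuous_on {a..b} F" "\<And>x. x \<in> {a..b} \<Longrightarrow> 0 \<le> F x \<and> F x \<le> G x"
    "{a..b} \<subseteq> S" "(\<integral>\<^sup>+x. indicator S x * ennreal (G x) \<partial>lborel) \<le> ennreal q" "0 \<le> q"
  shows "integral {a..b} F \<le> q"
proof -
  have "(F has_integral integral {a..b} F) {a..b}"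
    using assms(1) integrable_continuous_interval integrable_integral by blast
  then have "ennreal (integral {a..b} F) = (\<integral>\<^sup>+x. ennreal (F x) * indicator {a..b} x \<partial>lborel)"
    using assms(2) by (intro nn_integral_has_integral_lebesgue'[symmetric]) auto
  also have "\<dots> \<le> (\<integral>\<^sup>+x. indicator S x * ennreal (G x) \<partial>lborel)"
    using assms(2,3) by (intro nn_integral_mono) (auto simp: indicator_def intro: ennreal_leI)
  finally show ?thesis
    using assms(4,5) order_trans ennreal_le_iff by blast
qed

lemma dfun_ge_linear:
  assumes cont: "continuous_on {0..1} \<phi>" and pos: "\<forall>r\<in>{0..1}. \<phi> r > 0"
    and "0 \<le> \<gamma>" "0 < a"
  shows "\<exists>c>0. \<forall>x\<in>{a..1}. c * (1 - x) \<le> dfun \<phi> \<gamma> x"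
proof -
  obtain xM where xM: "xM \<in> {0..1}" "\<And>y. y \<in> {0..1} \<Longrightarrow> \<phi> y \<le> \<phi> xM"
    using continuous_attains_sup[of "{0..1::real}" \<phi>] cont by auto
  obtain xm where xm: "xm \<in> {0..1}" "\<And>y. y \<in> {0..1} \<Longrightarrow> \<phi> xm \<le> \<phi> y"
    using continuous_attains_inf[of "{0..1::real}" \<phi>] cont by auto
  define c where "c = \<phi> xM powr (-\<gamma>) * (a * \<phi> xm)"
  have "0 < \<phi> xM" "0 < \<phi> xm"
    using pos xM(1) xm(1) by auto
  then have "0 < c"
    using \<open>0 < a\<close> by (simp add: c_def)
  moreover have "c * (1 - x) \<le> dfun \<phi> \<gamma> x" if x: "x \<in> {a..1}" for x
  proof -
    have "integral {x..1} (\<lambda>l. a * \<phi> xm) \<le> integral {x..1} (\<lambda>l. l * \<phi> l)"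
    proof (rule integral_le)
      show "(\<lambda>l. l * \<phi> l) integrable_on {x..1}"
        using x \<open>0 < a\<close> cont
        by (intro integrable_continuous_interval continuous_intros continuous_on_subset[OF cont]) auto
      show "a * \<phi> xm \<le> l * \<phi> l" if "l \<in> {x..1}" for l
        using that x xm(2)[of l] \<open>0 < \<phi> xm\<close> \<open>0 < a\<close> by (intro mult_mono) auto
    qed auto
    moreover have "\<phi> xM powr (-\<gamma>) \<le> \<phi> x powr (-\<gamma>)"
      using \<open>0 \<le> \<gamma>\<close> pos xM x \<open>0 < a\<close> by (intro powr_mono2') auto
    ultimately have "\<phi> xM powr (-\<gamma>) * ((1 - x) * (a * \<phi> xm))
        \<le> \<phi> x powr (-\<gamma>) * integral {x..1} (\<lambda>l. l * \<phi> l)"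
      using x \<open>0 < \<phi> xm\<close> \<open>0 < a\<close> by (intro mult_mono) (auto simp: mult_ac)
    then show ?thesis
      by (simp add: c_def dfun_def mult_ac)
  qed
  ultimately show ?thesis
    by blast
qed

section \<open>Hardy estimates near r = 1\<close>

lemma hardy_pointwise:
  fixes w g h b :: real
  assumes "\<bar>b\<bar> \<le> 8"
  shows "2 * w * g * (h + b * g) \<le> g\<^sup>2 / 2 + 4 * w\<^sup>2 * h\<^sup>2 + 256 * w\<^sup>2 * g\<^sup>2"
proof -
  have "b\<^sup>2 \<le> 64"
    using power_mono[OF assms abs_ge_zero, of 2] by simp
  then have "2 * b\<^sup>2 * g\<^sup>2 \<le> 128 * g\<^sup>2"
    by (intro mult_right_mono) auto
  moreover have "(h + b * g)\<^sup>2 \<le> 2 * h\<^sup>2 + 2 * b\<^sup>2 * g\<^sup>2"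
    using sum_squares_ge_zero[of "h - b * g" 0] by (simp add: power2_eq_square algebra_simps)
  ultimately have "2 * w\<^sup>2 * (h + b * g)\<^sup>2 \<le> 2 * w\<^sup>2 * (2 * h\<^sup>2 + 128 * g\<^sup>2)"
    by (intro mult_left_mono) auto
  moreover have "2 * w * g * (h + b * g) \<le> g\<^sup>2 / 2 + 2 * w\<^sup>2 * (h + b * g)\<^sup>2"
    using sum_squares_ge_zero[of "g - 2 * w * (h + b * g)" 0]
    by (simp add: power2_eq_square algebra_simps)
  ultimately show ?thesis
    by (simp add: algebra_simps)
qed

lemma hardy_weighted_pointwise:
  fixes w g h b :: real
  assumes "0 \<le> w" "\<bar>b\<bar> \<le> 8"
  shows "1/2 * (w^n * g\<^sup>2) - 4 * (w^(n+2) * h\<^sup>2) - 256 * (w^(n+2) * g\<^sup>2)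
    \<le> real (n+1) * w^n * g\<^sup>2 - w^n * (2 * w * g * (h + b * g))"
proof -
  have "w^n * (2 * w * g * (h + b * g)) \<le> w^n * (g\<^sup>2 / 2 + 4 * w\<^sup>2 * h\<^sup>2 + 256 * w\<^sup>2 * g\<^sup>2)"
    using assms by (intro mult_left_mono hardy_pointwise) auto
  also have "\<dots> = 1/2 * (w^n * g\<^sup>2) + 4 * (w^(n+2) * h\<^sup>2) + 256 * (w^(n+2) * g\<^sup>2)"
    by (simp add: power_add power2_eq_square algebra_simps)
  finally have "w^n * (2 * w * g * (h + b * g))
      \<le> 1/2 * (w^n * g\<^sup>2) + 4 * (w^(n+2) * h\<^sup>2) + 256 * (w^(n+2) * g\<^sup>2)" .
  moreover have "real (n+1) * w^n * g\<^sup>2 = real n * (w^n * g\<^sup>2) + w^n * g\<^sup>2"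
    by (simp add: algebra_simps)
  moreover have "0 \<le> real n * (w^n * g\<^sup>2)"
    using assms(1) by auto
  ultimately show ?thesis
    by linarith
qed

lemma weighted_hardy_interval:
  fixes g h \<beta> :: "real \<Rightarrow> real"
  assumes st: "0 \<le> s" "s \<le> t" "t \<le> 1"
    and deriv: "\<And>x. x \<in> {s..t} \<Longrightarrow> (g has_real_derivative h x + \<beta> x * g x) (at x)"
    and \<beta>: "\<And>x. x \<in> {s..t} \<Longrightarrow> \<bar>\<beta> x\<bar> \<le> 8"
    and h: "continuous_on {s..t} h"
  shows "integral {s..t} (\<lambda>x. (1-x)^n * (g x)\<^sup>2)
     \<le> 2 * (g s)\<^sup>2 + 8 * integral {s..t} (\<lambda>x. (1-x)^(n+2) * (h x)\<^sup>2)
       + 512 * integral {s..t} (\<lambda>x. (1-x)^(n+2) * (g x)\<^sup>2)"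
proof -
  have g: "continuous_on {s..t} g"
    using deriv by (intro continuous_at_imp_continuous_on ballI DERIV_isCont) blast
  define G where "G x = 1/2 * ((1-x)^n * (g x)\<^sup>2) - 4 * ((1-x)^(n+2) * (h x)\<^sup>2)
    - 256 * ((1-x)^(n+2) * (g x)\<^sup>2)" for x
  have "integral {s..t} G \<le> - ((1-t)^(n+1) * (g t)\<^sup>2) - - ((1-s)^(n+1) * (g s)\<^sup>2)"
  proof (rule integral_le_increment[OF st(2)])
    fix x assume x: "x \<in> {s..t}"
    let ?D = "h x + \<beta> x * g x"
    have "((\<lambda>x. (1-x)^(n+1) * (g x)\<^sup>2) has_real_derivative
        (1-x)^(n+1) * (real 2 * (?D * (g x)^(2 - Suc 0)))
        + real (n+1) * ((0 - 1) * (1-x)^(n+1 - Suc 0)) * (g x)\<^sup>2) (at x)"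
      by (intro DERIV_mult' DERIV_power DERIV_diff DERIV_const DERIV_ident deriv x)
    then show "((\<lambda>x. - ((1-x)^(n+1) * (g x)\<^sup>2)) has_real_derivative
        real (n+1) * (1-x)^n * (g x)\<^sup>2 - (1-x)^n * (2 * (1-x) * g x * ?D)) (at x)"
      by (auto dest: DERIV_minus simp: algebra_simps)
    show "G x \<le> real (n+1) * (1-x)^n * (g x)\<^sup>2 - (1-x)^n * (2 * (1-x) * g x * ?D)"
      unfolding G_def using x st \<beta>[OF x] by (intro hardy_weighted_pointwise) auto
  next
    show "continuous_on {s..t} G"
      unfolding G_def using g h by (intro continuous_intros)
  qed
  also have "\<dots> \<le> (g s)\<^sup>2"
  proof -
    have "(1-s)^(n+1) * (g s)\<^sup>2 \<le> 1 * (g s)\<^sup>2"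
      using st by (intro mult_right_mono power_le_one) auto
    moreover have "0 \<le> (1-t)^(n+1) * (g t)\<^sup>2"
      using st by simp
    ultimately show ?thesis
      by simp
  qed
  finally have "integral {s..t} G \<le> (g s)\<^sup>2" .
  moreover have "integral {s..t} G = 1/2 * integral {s..t} (\<lambda>x. (1-x)^n * (g x)\<^sup>2)
      - 4 * integral {s..t} (\<lambda>x. (1-x)^(n+2) * (h x)\<^sup>2)
      - 256 * integral {s..t} (\<lambda>x. (1-x)^(n+2) * (g x)\<^sup>2)"
    unfolding G_def using g h
    by (subst integral_diff integral_mult_right;
        auto intro!: integrable_continuous_interval continuous_intros)+
  ultimately show ?thesis
    by simp
qed

lemma weighted_hardy_step:
  fixes g h \<beta> :: "real \<Rightarrow> real"
  assumes deriv: "\<And>x. x \<in> {0<..<1} \<Longrightarrow> (g has_real_derivative h x + \<beta> x * g x) (at x)"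
    and \<beta>: "\<And>x. x \<in> {1/4..<1} \<Longrightarrow> \<bar>\<beta> x\<bar> \<le> 8"
    and h: "continuous_on {0<..<1} h"
    and t: "1/2 \<le> t" "t < 1"
  shows "integral {1/4..t} (\<lambda>x. (1-x)^n * (g x)\<^sup>2)
     \<le> 9 * integral {1/4..1/2} (\<lambda>x. (g x)\<^sup>2)
       + 8 * integral {1/4..t} (\<lambda>x. (1-x)^(n+2) * (h x)\<^sup>2)
       + 512 * integral {1/4..t} (\<lambda>x. (1-x)^(n+2) * (g x)\<^sup>2)"
proof -
  have "continuous_on {0<..<1} g"
    using deriv by (intro continuous_at_imp_continuous_on ballI DERIV_isCont) blast
  then have g: "continuous_on {1/4..t} g" and h': "continuous_on {1/4..t} h"
    using h t by (auto intro: continuous_on_closed_subinterval)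
  obtain s where s: "s \<in> {1/4..1/2}" "(1/2 - 1/4) * (g s)\<^sup>2 \<le> integral {1/4..1/2} (\<lambda>x. (g x)\<^sup>2)"
    using exists_sq_le_mean[of "1/4" "1/2" g] continuous_on_subset[OF g] t by auto
  have interval: "integral {s..t} (\<lambda>x. (1-x)^n * (g x)\<^sup>2)
     \<le> 2 * (g s)\<^sup>2 + 8 * integral {s..t} (\<lambda>x. (1-x)^(n+2) * (h x)\<^sup>2)
       + 512 * integral {s..t} (\<lambda>x. (1-x)^(n+2) * (g x)\<^sup>2)"
    using s t by (intro weighted_hardy_interval[where \<beta>=\<beta>] deriv \<beta> continuous_on_subset[OF h']) auto
  have "integral {s..t} (\<lambda>x. (1-x)^(n+2) * (f x)\<^sup>2) \<le> integral {1/4..t} (\<lambda>x. (1-x)^(n+2) * (f x)\<^sup>2)"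
    if "continuous_on {1/4..t} f" for f
    using that s t by (intro integral_subinterval_le) (auto intro!: continuous_intros)
  note sub = this[OF g] this[OF h']
  have "integral {1/4..s} (\<lambda>x. (1-x)^n * (g x)\<^sup>2) \<le> integral {1/4..s} (\<lambda>x. (g x)\<^sup>2)"
  proof (rule integral_le)
    show "(\<lambda>x. (1-x)^n * (g x)\<^sup>2) integrable_on {1/4..s}" "(\<lambda>x. (g x)\<^sup>2) integrable_on {1/4..s}"
      using s t continuous_on_subset[OF g]
      by (auto intro!: integrable_continuous_interval continuous_intros)
    show "(1-x)^n * (g x)\<^sup>2 \<le> (g x)\<^sup>2" if "x \<in> {1/4..s}" for x
      using that s by (intro mult_left_le_one_le power_le_one) auto
  qed
  also have "\<dots> \<le> integral {1/4..1/2} (\<lambda>x. (g x)\<^sup>2)"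
    using s t g by (intro integral_subinterval_le continuous_on_subset[OF continuous_on_power]) auto
  finally have left: "integral {1/4..s} (\<lambda>x. (1-x)^n * (g x)\<^sup>2) \<le> integral {1/4..1/2} (\<lambda>x. (g x)\<^sup>2)" .
  have "integral {1/4..s} (\<lambda>x. (1-x)^n * (g x)\<^sup>2) + integral {s..t} (\<lambda>x. (1-x)^n * (g x)\<^sup>2)
      = integral {1/4..t} (\<lambda>x. (1-x)^n * (g x)\<^sup>2)"
    using s t g by (intro Henstock_Kurzweil_Integration.integral_combine)
      (auto intro!: integrable_continuous_interval continuous_intros)
  moreover have "(g s)\<^sup>2 \<le> 4 * integral {1/4..1/2} (\<lambda>x. (g x)\<^sup>2)"
    using s(2) by simp
  ultimately show ?thesis
    using interval sub left by linarith
qed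

lemma integral_sq_le_weighted:
  fixes g :: "real \<Rightarrow> real"
  assumes "continuous_on {a..b} g" "b \<le> 1"
  shows "(1-b)^n * integral {a..b} (\<lambda>x. (g x)\<^sup>2) \<le> integral {a..b} (\<lambda>x. (1-x)^n * (g x)\<^sup>2)"
proof -
  have "integral {a..b} (\<lambda>x. (1-b)^n * (g x)\<^sup>2) \<le> integral {a..b} (\<lambda>x. (1-x)^n * (g x)\<^sup>2)"
    using assms by (intro integral_le integrable_continuous_interval continuous_intros
        mult_right_mono power_mono) auto
  then show ?thesis
    by simp
qed

lemma integral_sq_le_weighted_half:
  fixes g :: "real \<Rightarrow> real"
  assumes "continuous_on {1/4..1/2} g"
  shows "integral {1/4..1/2} (\<lambda>x. (g x)\<^sup>2) \<le> 4^m * integral {1/4..1/2} (\<lambda>x. (1-x)^(2*m) * (g x)\<^sup>2)"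
proof -
  have "(1 - 1/2 :: real)^(2*m) = 1 / 4^m"
    by (simp add: power_mult power_divide)
  then show ?thesis
    using integral_sq_le_weighted[OF assms, of "2*m"] by (simp add: field_simps)
qed

lemma weighted_L2_descent:
  fixes h \<beta> :: "nat \<Rightarrow> real \<Rightarrow> real"
  assumes deriv: "\<And>j x. x \<in> {0<..<1} \<Longrightarrow> (h j has_real_derivative h (Suc j) x + \<beta> j x * h j x) (at x)"
    and \<beta>: "\<And>j x. x \<in> {1/4..<1} \<Longrightarrow> \<bar>\<beta> j x\<bar> \<le> 8"
    and base: "\<And>j t. j \<le> m + 1 \<Longrightarrow> 1/2 \<le> t \<Longrightarrow> t < 1 \<Longrightarrow>
        integral {1/4..t} (\<lambda>x. (1-x)^(2*m) * (h j x)\<^sup>2) \<le> q"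
    and "0 \<le> q" "\<tau> \<le> m" "j + \<tau> \<le> m + 1" "1/2 \<le> t" "t < 1"
  shows "integral {1/4..t} (\<lambda>x. (1-x)^(2*(m-\<tau>)) * (h j x)\<^sup>2) \<le> (9 * 4^m + 520)^\<tau> * q"
  using assms(5-)
proof (induction \<tau> arbitrary: j t)
  case 0
  then show ?case using base by simp
next
  case (Suc \<tau>)
  have cont: "continuous_on {0<..<1} (h i)" for i
    using deriv by (intro continuous_at_imp_continuous_on ballI DERIV_isCont) blast
  define B :: real where "B = (9 * 4^m + 520)^\<tau>"
  have "1 \<le> B"
    unfolding B_def by (rule one_le_power) simp
  have "integral {1/4..1/2} (\<lambda>x. (h j x)\<^sup>2)
      \<le> 4^m * integral {1/4..1/2} (\<lambda>x. (1-x)^(2*m) * (h j x)\<^sup>2)"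
    using continuous_on_closed_subinterval[OF cont] by (rule integral_sq_le_weighted_half) auto
  also have "\<dots> \<le> 4^m * q"
    using base[of j "1/2"] Suc.prems by simp
  also have "\<dots> \<le> 4^m * (B * q)"
    using \<open>1 \<le> B\<close> \<open>0 \<le> q\<close> by (simp add: mult_right_mono[of 1 B q, simplified])
  finally have Y: "integral {1/4..1/2} (\<lambda>x. (h j x)\<^sup>2) \<le> 4^m * (B * q)" .
  have n: "2 * (m - Suc \<tau>) + 2 = 2 * (m - \<tau>)"
    using Suc.prems by simp
  have "integral {1/4..t} (\<lambda>x. (1-x)^(2*(m - Suc \<tau>)) * (h j x)\<^sup>2)
      \<le> 9 * integral {1/4..1/2} (\<lambda>x. (h j x)\<^sup>2)
        + 8 * integral {1/4..t} (\<lambda>x. (1-x)^(2*(m-\<tau>)) * (h (Suc j) x)\<^sup>2)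
        + 512 * integral {1/4..t} (\<lambda>x. (1-x)^(2*(m-\<tau>)) * (h j x)\<^sup>2)"
    using weighted_hardy_step[where g="h j" and h="h (Suc j)" and \<beta>="\<beta> j" and n="2 * (m - Suc \<tau>)",
        OF deriv \<beta> cont Suc.prems(3,4)]
    unfolding n .
  also have "\<dots> \<le> 9 * (4^m * (B * q)) + 8 * (B * q) + 512 * (B * q)"
    using Y Suc.IH[of "Suc j" t] Suc.IH[of j t] Suc.prems unfolding B_def by linarith
  also have "\<dots> = (9 * 4^m + 520)^Suc \<tau> * q"
    unfolding B_def by (simp add: algebra_simps)
  finally show ?case .
qed

lemma sq_increment_le_integral:
  fixes g h \<beta> :: "real \<Rightarrow> real"
  assumes "s \<le> r"
    and deriv: "\<And>x. x \<in> {s..r} \<Longrightarrow> (g has_real_derivative h x + \<beta> x * g x) (at x)"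
    and \<beta>: "\<And>x. x \<in> {s..r} \<Longrightarrow> \<bar>\<beta> x\<bar> \<le> 8"
    and h: "continuous_on {s..r} h"
  shows "(g r)\<^sup>2 - (g s)\<^sup>2 \<le> integral {s..r} (\<lambda>x. 17 * (g x)\<^sup>2 + (h x)\<^sup>2)"
proof (rule increment_le_integral[OF assms(1)])
  fix x assume x: "x \<in> {s..r}"
  show "((\<lambda>x. (g x)\<^sup>2) has_real_derivative 2 * g x * (h x + \<beta> x * g x)) (at x)"
    using DERIV_power[OF deriv[OF x], of 2] by (simp add: mult_ac)
  have "\<beta> x * (g x)\<^sup>2 \<le> 8 * (g x)\<^sup>2"
    using \<beta>[OF x] by (intro mult_right_mono) auto
  moreover have "2 * g x * h x \<le> (g x)\<^sup>2 + (h x)\<^sup>2"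
    using sum_squares_ge_zero[of "g x - h x" 0] by (simp add: power2_eq_square algebra_simps)
  ultimately show "2 * g x * (h x + \<beta> x * g x) \<le> 17 * (g x)\<^sup>2 + (h x)\<^sup>2"
    by (simp add: algebra_simps power2_eq_square)
next
  have "continuous_on {s..r} g"
    using deriv by (intro continuous_at_imp_continuous_on ballI DERIV_isCont) blast
  then show "continuous_on {s..r} (\<lambda>x. 17 * (g x)\<^sup>2 + (h x)\<^sup>2)"
    using h by (intro continuous_intros)
qed

lemma sq_le_near_1:
  fixes h \<beta> :: "nat \<Rightarrow> real \<Rightarrow> real"
  assumes deriv: "\<And>j x. x \<in> {0<..<1} \<Longrightarrow> (h j has_real_derivative h (Suc j) x + \<beta> j x * h j x) (at x)"
    and \<beta>: "\<And>j x. x \<in> {1/4..<1} \<Longrightarrow> \<bar>\<beta> j x\<bar> \<le> 8"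
    and base: "\<And>j t. j \<le> m + 1 \<Longrightarrow> 1/2 \<le> t \<Longrightarrow> t < 1 \<Longrightarrow>
        integral {1/4..t} (\<lambda>x. (1-x)^(2*m) * (h j x)\<^sup>2) \<le> q"
    and "0 \<le> q" "1/2 \<le> r" "r < 1"
  shows "(h 0 r)\<^sup>2 \<le> (4 * 4^m + 18 * (9 * 4^m + 520)^m) * q"
proof -
  have cont: "continuous_on {0<..<1} (h i)" for i
    using deriv by (intro continuous_at_imp_continuous_on ballI DERIV_isCont) blast
  have L2: "integral {s..r} (\<lambda>x. (h j x)\<^sup>2) \<le> (9 * 4^m + 520)^m * q"
    if "j \<le> 1" "1/4 \<le> s" for j s
  proof -
    have "integral {s..r} (\<lambda>x. (h j x)\<^sup>2) \<le> integral {1/4..r} (\<lambda>x. (h j x)\<^sup>2)"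
      using that \<open>r < 1\<close> cont
      by (intro integral_subinterval_le continuous_intros continuous_on_closed_subinterval) auto
    also have "\<dots> \<le> (9 * 4^m + 520)^m * q"
      using weighted_L2_descent[where h=h and \<beta>=\<beta> and m=m and \<tau>=m and j=j and t=r,
          OF deriv \<beta> base \<open>0 \<le> q\<close>] that assms(5,6) by simp
    finally show ?thesis .
  qed
  obtain s where s: "s \<in> {1/4..1/2}" "(1/2 - 1/4) * (h 0 s)\<^sup>2 \<le> integral {1/4..1/2} (\<lambda>x. (h 0 x)\<^sup>2)"
    using exists_sq_le_mean[of "1/4" "1/2" "h 0"] continuous_on_closed_subinterval[OF cont] by auto
  have "integral {1/4..1/2} (\<lambda>x. (h 0 x)\<^sup>2)
      \<le> 4^m * integral {1/4..1/2} (\<lambda>x. (1-x)^(2*m) * (h 0 x)\<^sup>2)"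
    using continuous_on_closed_subinterval[OF cont] by (rule integral_sq_le_weighted_half) auto
  also have "\<dots> \<le> 4^m * q"
    using base[of 0 "1/2"] by simp
  finally have hs: "(h 0 s)\<^sup>2 \<le> 4 * 4^m * q"
    using s(2) by simp
  have sr: "s \<le> r" "0 < s" "r < 1"
    using s assms(5,6) by auto
  have "(h 0 r)\<^sup>2 - (h 0 s)\<^sup>2 \<le> integral {s..r} (\<lambda>x. 17 * (h 0 x)\<^sup>2 + (h 1 x)\<^sup>2)"
  proof (rule sq_increment_le_integral[where \<beta>="\<beta> 0"])
    show "continuous_on {s..r} (h 1)"
      using continuous_on_closed_subinterval[OF cont] sr by blast
  qed (use sr s deriv \<beta> in auto)
  also have "\<dots> = 17 * integral {s..r} (\<lambda>x. (h 0 x)\<^sup>2) + integral {s..r} (\<lambda>x. (h 1 x)\<^sup>2)"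
    using s assms(6) cont
    by (subst integral_add) (auto intro!: integrable_continuous_interval continuous_intros
        continuous_on_closed_subinterval)
  finally show ?thesis
    using hs L2[of 0 s] L2[of 1 s] s(1) by (simp add: algebra_simps)
qed

section \<open>Estimates near r = 0\<close>

lemma mult_sq_le_integral_deriv:
  fixes g p :: "real \<Rightarrow> real"
  assumes "r \<le> s"
    and deriv: "\<And>x. x \<in> {r..s} \<Longrightarrow> (g has_real_derivative p x) (at x)"
    and p: "continuous_on {r..s} p"
  shows "r * (g r)\<^sup>2 \<le> s * (g s)\<^sup>2 + integral {r..s} (\<lambda>x. x\<^sup>2 * (p x)\<^sup>2)"
proof -
  have "integral {r..s} (\<lambda>x. - (x\<^sup>2 * (p x)\<^sup>2)) \<le> s * (g s)\<^sup>2 - r * (g r)\<^sup>2"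
  proof (rule integral_le_increment[OF assms(1)])
    fix x assume x: "x \<in> {r..s}"
    show "((\<lambda>x. x * (g x)\<^sup>2) has_real_derivative x * (2 * g x * p x) + (g x)\<^sup>2) (at x)"
      using DERIV_mult'[OF DERIV_ident DERIV_power[OF deriv[OF x], of 2]] by (simp add: mult_ac)
    have "0 \<le> (g x + x * p x)\<^sup>2"
      by simp
    then show "- (x\<^sup>2 * (p x)\<^sup>2) \<le> x * (2 * g x * p x) + (g x)\<^sup>2"
      by (simp add: power2_eq_square algebra_simps)
  qed (use p in \<open>intro continuous_intros\<close>)
  then show ?thesis
    by simp
qed

lemma sq_le_integral_deriv:
  fixes f p :: "real \<Rightarrow> real"
  assumes "0 \<le> r" "r \<le> s" "s \<le> 1"
    and deriv: "\<And>x. x \<in> {r..s} \<Longrightarrow> (f has_real_derivative p x) (at x)"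
    and p: "continuous_on {r..s} p"
  shows "(f r)\<^sup>2 \<le> 2 * (f s)\<^sup>2 + 4 * integral {r..s} (\<lambda>x. (p x)\<^sup>2)"
proof -
  have "integral {r..s} (\<lambda>x. - 4 * (p x)\<^sup>2) \<le> (1 + s) * (f s)\<^sup>2 - (1 + r) * (f r)\<^sup>2"
  proof (rule integral_le_increment[OF assms(2)])
    fix x assume x: "x \<in> {r..s}"
    show "((\<lambda>x. (1 + x) * (f x)\<^sup>2) has_real_derivative (1 + x) * (2 * f x * p x) + (f x)\<^sup>2) (at x)"
      using DERIV_mult'[OF DERIV_add[OF DERIV_const[of 1] DERIV_ident] DERIV_power[OF deriv[OF x], of 2]]
      by (simp add: mult_ac)
    have "0 \<le> (f x + (1 + x) * p x)\<^sup>2"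
      by simp
    then have "- ((1 + x)\<^sup>2 * (p x)\<^sup>2) \<le> (1 + x) * (2 * f x * p x) + (f x)\<^sup>2"
      by (simp add: power2_eq_square algebra_simps)
    moreover have "(1 + x)\<^sup>2 * (p x)\<^sup>2 \<le> 2\<^sup>2 * (p x)\<^sup>2"
      using x assms(1,3) by (intro mult_right_mono power_mono) auto
    ultimately show "- 4 * (p x)\<^sup>2 \<le> (1 + x) * (2 * f x * p x) + (f x)\<^sup>2"
      by simp
  qed (use p in \<open>intro continuous_intros\<close>)
  moreover have "(1 + s) * (f s)\<^sup>2 \<le> 2 * (f s)\<^sup>2"
    using assms(3) by (intro mult_right_mono) auto
  moreover have "(f r)\<^sup>2 \<le> (1 + r) * (f r)\<^sup>2"
    using assms(1) by (simp add: algebra_simps)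
  ultimately show ?thesis
    by simp
qed

lemma integral_weighted_le_of_nn_integral:
  fixes g w :: "real \<Rightarrow> real"
  assumes g: "continuous_on {a..b} g" and "1/4 \<le> a" "b \<le> 1"
    and c: "0 < c" and w: "\<And>x. x \<in> {1/4..1} \<Longrightarrow> c * (1 - x) \<le> w x"
    and T: "(\<integral>\<^sup>+x. indicator {1/4..1} x * ennreal ((w x)^(2*m) * (g x)\<^sup>2) \<partial>lborel) \<le> ennreal q"
    and "0 \<le> q"
  shows "integral {a..b} (\<lambda>x. (1-x)^(2*m) * (g x)\<^sup>2) \<le> q / c^(2*m)"
proof -
  have "integral {a..b} (\<lambda>x. c^(2*m) * ((1-x)^(2*m) * (g x)\<^sup>2)) \<le> q"
  proof (rule integral_le_of_nn_integral_le[OF _ _ _ T \<open>0 \<le> q\<close>])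
    show "continuous_on {a..b} (\<lambda>x. c^(2*m) * ((1-x)^(2*m) * (g x)\<^sup>2))"
      using g by (intro continuous_intros)
    show "{a..b} \<subseteq> {1/4..1}"
      using assms(2,3) by auto
    fix x assume x: "x \<in> {a..b}"
    then have "0 \<le> c * (1 - x)" "c * (1 - x) \<le> w x"
      using assms(2,3) c w[of x] by auto
    then have "(c * (1 - x))^(2*m) * (g x)\<^sup>2 \<le> (w x)^(2*m) * (g x)\<^sup>2"
      by (intro mult_right_mono power_mono) auto
    moreover have "0 \<le> (1 - x)^(2*m)"
      using x assms(3) by auto
    ultimately show "0 \<le> c^(2*m) * ((1-x)^(2*m) * (g x)\<^sup>2)
        \<and> c^(2*m) * ((1-x)^(2*m) * (g x)\<^sup>2) \<le> (w x)^(2*m) * (g x)\<^sup>2"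
      using c by (simp add: power_mult_distrib mult.assoc)
  qed
  then have "c^(2*m) * integral {a..b} (\<lambda>x. (1-x)^(2*m) * (g x)\<^sup>2) \<le> q"
    by simp
  then show ?thesis
    using c by (simp add: pos_le_divide_eq mult.commute)
qed

lemma Pclass_sq_le_near_1:
  fixes u w :: "real \<Rightarrow> real"
  assumes u: "deriv_smooth {0<..<1} u" and A: "A \<in> Pclass k"
    and c: "0 < c" and w: "\<And>x. x \<in> {1/4..1} \<Longrightarrow> c * (1 - x) \<le> w x" and "0 \<le> q"
    and T: "\<And>j B. j \<le> m + 1 \<Longrightarrow> B \<in> Pclass (j + k) \<Longrightarrow>
       (\<integral>\<^sup>+x. indicator {1/4..1} x * ennreal ((w x)^(2*m) * (B u x)\<^sup>2) \<partial>lborel) \<le> ennreal q"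
    and "1/2 \<le> r" "r < 1"
  shows "(A u r)\<^sup>2 \<le> (4 * 4^m + 18 * (9 * 4^m + 520)^m) * (q / c^(2*m))"
proof -
  have Au: "deriv_smooth {0<..<1} (A u)"
    by (rule deriv_smooth_Pclass[OF _ _ u A]) auto
  have "(Pchain k A 0 u r)\<^sup>2 \<le> (4 * 4^m + 18 * (9 * 4^m + 520)^m) * (q / c^(2*m))"
  proof (rule sq_le_near_1[where h="\<lambda>j. Pchain k A j u" and \<beta>="\<lambda>j. chain_coeff (j + k)"])
    show "(Pchain k A j u has_real_derivative
        Pchain k A (Suc j) u x + chain_coeff (j + k) x * Pchain k A j u x) (at x)"
      if "x \<in> {0<..<1}" for j x
      using Au that by (intro Pchain_has_derivative) auto
    show "\<bar>chain_coeff (j + k) x\<bar> \<le> 8" if "x \<in> {1/4..<1}" for j x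
      using that by (intro abs_chain_coeff_le) auto
    show "integral {1/4..t} (\<lambda>x. (1-x)^(2*m) * (Pchain k A j u x)\<^sup>2) \<le> q / c^(2*m)"
      if "j \<le> m + 1" "1/2 \<le> t" "t < 1" for j t
    proof (rule integral_weighted_le_of_nn_integral[OF _ _ _ c w])
      show "continuous_on {1/4..t} (Pchain k A j u)"
        using deriv_smooth_continuous_on[OF deriv_smooth_Pchain[where A=A and u=u, OF _ _ Au]] that
        by (intro continuous_on_closed_subinterval) auto
      show "(\<integral>\<^sup>+x. indicator {1/4..1} x * ennreal ((w x)^(2*m) * (Pchain k A j u x)\<^sup>2) \<partial>lborel)
          \<le> ennreal q"
        using T[OF that(1) Pchain_Pclass[OF A]] .
    qed (use that \<open>0 \<le> q\<close> in auto)
  qed (use \<open>0 \<le> q\<close> c assms(7,8) in auto)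
  then show ?thesis
    by simp
qed

lemma mult_sq_le_near_0:
  fixes g p :: "real \<Rightarrow> real"
  assumes r: "0 \<le> r" "r \<le> 1/2"
    and deriv: "\<And>x. x \<in> {r..3/4} \<Longrightarrow> (g has_real_derivative p x) (at x)"
    and p: "continuous_on {r..3/4} p"
    and I: "integral {r..3/4} (\<lambda>x. x\<^sup>2 * (p x)\<^sup>2) \<le> q"
    and Q: "integral {1/2..3/4} (\<lambda>x. (g x)\<^sup>2) \<le> Q"
  shows "r * (g r)\<^sup>2 \<le> 4 * Q + q"
proof -
  have "continuous_on {1/2..3/4} g"
    using r by (intro continuous_at_imp_continuous_on ballI DERIV_isCont[OF deriv]) auto
  then obtain s where s: "s \<in> {1/2..3/4}" "(3/4 - 1/2) * (g s)\<^sup>2 \<le> integral {1/2..3/4} (\<lambda>x. (g x)\<^sup>2)"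
    using exists_sq_le_mean[of "1/2" "3/4" g] by auto
  have "r * (g r)\<^sup>2 \<le> s * (g s)\<^sup>2 + integral {r..s} (\<lambda>x. x\<^sup>2 * (p x)\<^sup>2)"
    using r s deriv continuous_on_subset[OF p] by (intro mult_sq_le_integral_deriv) auto
  moreover have "integral {r..s} (\<lambda>x. x\<^sup>2 * (p x)\<^sup>2) \<le> integral {r..3/4} (\<lambda>x. x\<^sup>2 * (p x)\<^sup>2)"
    using s p by (intro integral_subinterval_le continuous_intros) auto
  moreover have "s * (g s)\<^sup>2 \<le> (g s)\<^sup>2"
    using s by (intro mult_left_le_one_le) auto
  ultimately show ?thesis
    using s(2) I Q by simp
qed

lemma sq_le_near_0:
  fixes f p :: "real \<Rightarrow> real"
  assumes r: "0 \<le> r" "r \<le> 1/2"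
    and deriv: "\<And>x. x \<in> {r..3/4} \<Longrightarrow> (f has_real_derivative p x) (at x)"
    and p: "continuous_on {r..3/4} p"
    and I: "integral {r..3/4} (\<lambda>x. (p x)\<^sup>2) \<le> q"
    and Q: "integral {1/2..3/4} (\<lambda>x. (f x)\<^sup>2) \<le> Q"
  shows "(f r)\<^sup>2 \<le> 8 * Q + 4 * q"
proof -
  have "continuous_on {1/2..3/4} f"
    using r by (intro continuous_at_imp_continuous_on ballI DERIV_isCont[OF deriv]) auto
  then obtain s where s: "s \<in> {1/2..3/4}" "(3/4 - 1/2) * (f s)\<^sup>2 \<le> integral {1/2..3/4} (\<lambda>x. (f x)\<^sup>2)"
    using exists_sq_le_mean[of "1/2" "3/4" f] by auto
  have "(f r)\<^sup>2 \<le> 2 * (f s)\<^sup>2 + 4 * integral {r..s} (\<lambda>x. (p x)\<^sup>2)"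
    using r s deriv continuous_on_subset[OF p] by (intro sq_le_integral_deriv) auto
  moreover have "integral {r..s} (\<lambda>x. (p x)\<^sup>2) \<le> integral {r..3/4} (\<lambda>x. (p x)\<^sup>2)"
    using s p by (intro integral_subinterval_le continuous_intros) auto
  ultimately show ?thesis
    using s(2) I Q by simp
qed

lemma Pclass_sq_le_near_0_even:
  fixes u :: "real \<Rightarrow> real"
  assumes u: "deriv_smooth {0<..<1} u" and A: "A \<in> Pclass k" "even k" and "0 \<le> q"
    and T: "\<And>j B. j \<in> {1..2} \<Longrightarrow> B \<in> Pclass (j + k) \<Longrightarrow>
       (\<integral>\<^sup>+x. indicator {0..3/4} x * ennreal ((B u x)\<^sup>2 * x\<^sup>2) \<partial>lborel) \<le> ennreal q"
    and r: "0 < r" "r \<le> 1/2"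
  shows "(A u r)\<^sup>2 \<le> 17 * q"
proof -
  define g where "g = (Inv_op \<circ> A) u"
  have g_cls: "Inv_op \<circ> A \<in> Pclass (1 + k)"
    using Pclass_vop_comp[OF A(2,1), of VInv] by simp
  then have p_cls: "dr_op \<circ> (Inv_op \<circ> A) \<in> Pclass (2 + k)"
    using Pclass_dr_op_comp[of "1 + k"] A(2) by simp
  have g: "deriv_smooth {0<..<1} g"
    unfolding g_def by (rule deriv_smooth_Pclass[OF _ _ u g_cls]) auto
  have cont: "continuous_on {r..3/4} g" "continuous_on {r..3/4} (deriv g)"
    using r deriv_smooth_continuous_on[OF g] deriv_smooth_continuous_on[OF deriv_smooth_deriv[OF g]]
    by (auto intro: continuous_on_closed_subinterval)
  have "integral {r..3/4} (\<lambda>x. x\<^sup>2 * (deriv g x)\<^sup>2) \<le> q"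
    using r cont by (intro integral_le_of_nn_integral_le[OF _ _ _ T[OF _ p_cls] \<open>0 \<le> q\<close>])
      (auto intro!: continuous_intros simp: g_def dr_op_def)
  moreover have "integral {1/2..3/4} (\<lambda>x. (g x)\<^sup>2 / 4) \<le> q"
  proof (rule integral_le_of_nn_integral_le[OF _ _ _ T[OF _ g_cls] \<open>0 \<le> q\<close>])
    show "continuous_on {1/2..3/4} (\<lambda>x. (g x)\<^sup>2 / 4)"
      using r continuous_on_subset[OF cont(1)] by (auto intro!: continuous_intros)
    show "0 \<le> (g x)\<^sup>2 / 4 \<and> (g x)\<^sup>2 / 4 \<le> ((Inv_op \<circ> A) u x)\<^sup>2 * x\<^sup>2"
      if "x \<in> {1/2..3/4}" for x
    proof -
      have "(1/2)\<^sup>2 \<le> x\<^sup>2"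
        using that by (intro power_mono) auto
      then have "(g x)\<^sup>2 * (1/4) \<le> (g x)\<^sup>2 * x\<^sup>2"
        by (intro mult_left_mono) (auto simp: power2_eq_square)
      then show ?thesis
        unfolding g_def[symmetric] by simp
    qed
  qed auto
  ultimately have "r * (g r)\<^sup>2 \<le> 4 * (4 * q) + q"
    using r deriv_smooth_has_derivative[OF g] cont(2)
    by (intro mult_sq_le_near_0[where p="deriv g"]) auto
  moreover have "r * (r * (g r)\<^sup>2) \<le> r * (g r)\<^sup>2"
    using r by (intro mult_left_le_one_le) auto
  moreover have "A u r = r * g r"
    using r by (simp add: g_def Inv_op_def)
  ultimately show ?thesis
    by (simp add: power2_eq_square mult_ac)
qed

lemma Pclass_sq_le_near_0_odd:
  fixes u w :: "real \<Rightarrow> real"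
  assumes u: "deriv_smooth {0<..<1} u" and A: "A \<in> Pclass k" "odd k" and "0 \<le> q"
    and c: "0 < c" and w: "\<And>x. x \<in> {1/4..1} \<Longrightarrow> c * (1 - x) \<le> w x"
    and T1: "\<And>j B. j \<in> {1..2} \<Longrightarrow> B \<in> Pclass (j + k) \<Longrightarrow>
       (\<integral>\<^sup>+x. indicator {0..3/4} x * ennreal ((B u x)\<^sup>2 * x\<^sup>2) \<partial>lborel) \<le> ennreal q"
    and T2: "(\<integral>\<^sup>+x. indicator {1/4..1} x * ennreal ((w x)^(2*m) * (A u x)\<^sup>2) \<partial>lborel) \<le> ennreal q"
    and r: "0 < r" "r \<le> 1/2"
  shows "(A u r)\<^sup>2 \<le> (4 + 8 * (4/c)^(2*m)) * q"
proof -
  have p_cls: "dr_op \<circ> A \<in> Pclass (1 + k)"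
    using Pclass_dr_op_comp[OF A(2,1)] by simp
  then have p_cls': "Inv_op \<circ> (dr_op \<circ> A) \<in> Pclass (2 + k)"
    using Pclass_vop_comp[of "1 + k" _ VInv] A(2) by simp
  have f: "deriv_smooth {0<..<1} (A u)"
    by (rule deriv_smooth_Pclass[OF _ _ u A(1)]) auto
  have cont: "continuous_on {r..3/4} (A u)" "continuous_on {r..3/4} (deriv (A u))"
    using r deriv_smooth_continuous_on[OF f] deriv_smooth_continuous_on[OF deriv_smooth_deriv[OF f]]
    by (auto intro: continuous_on_closed_subinterval)
  then have cont_half: "continuous_on {1/2..3/4} (A u)"
    using r by (auto intro: continuous_on_subset)
  have "(1/4)^(2*m) * integral {1/2..3/4} (\<lambda>x. (A u x)\<^sup>2)
      \<le> integral {1/2..3/4} (\<lambda>x. (1-x)^(2*m) * (A u x)\<^sup>2)"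
    using integral_sq_le_weighted[OF cont_half, of "2*m"] by simp
  also have "\<dots> \<le> q / c^(2*m)"
    using integral_weighted_le_of_nn_integral[OF cont_half _ _ c w T2 \<open>0 \<le> q\<close>] by simp
  finally have "integral {1/2..3/4} (\<lambda>x. (A u x)\<^sup>2) \<le> (4/c)^(2*m) * q"
    using c by (simp add: power_divide field_simps)
  moreover have "integral {r..3/4} (\<lambda>x. (deriv (A u) x)\<^sup>2) \<le> q"
  proof (rule integral_le_of_nn_integral_le[OF _ _ _ T1[OF _ p_cls'] \<open>0 \<le> q\<close>])
    show "0 \<le> (deriv (A u) x)\<^sup>2 \<and> (deriv (A u) x)\<^sup>2 \<le> ((Inv_op \<circ> (dr_op \<circ> A)) u x)\<^sup>2 * x\<^sup>2"
      if "x \<in> {r..3/4}" for x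
      using that r by (simp add: dr_op_def Inv_op_def power_divide)
  qed (use r cont in \<open>auto intro!: continuous_intros\<close>)
  ultimately have "(A u r)\<^sup>2 \<le> 8 * ((4/c)^(2*m) * q) + 4 * q"
    using r deriv_smooth_has_derivative[OF f] cont(2)
    by (intro sq_le_near_0[where p="deriv (A u)"]) auto
  then show ?thesis
    by (simp add: algebra_simps)
qed

lemma Pclass_sq_le:
  fixes u w :: "real \<Rightarrow> real"
  assumes u: "deriv_smooth {0<..<1} u" and A: "A \<in> Pclass k" and "0 \<le> q"
    and c: "0 < c" and w: "\<And>x. x \<in> {1/4..1} \<Longrightarrow> c * (1 - x) \<le> w x"
    and T1: "\<And>j B. j \<in> {1..2} \<Longrightarrow> B \<in> Pclass (j + k) \<Longrightarrow>
       (\<integral>\<^sup>+x. indicator {0..3/4} x * ennreal ((B u x)\<^sup>2 * x\<^sup>2) \<partial>lborel) \<le> ennreal q"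
    and T2: "\<And>j B. j \<in> {0..m+1} \<Longrightarrow> B \<in> Pclass (j + k) \<Longrightarrow>
       (\<integral>\<^sup>+x. indicator {1/4..1} x * ennreal ((w x)^(2*m) * (B u x)\<^sup>2) \<partial>lborel) \<le> ennreal q"
    and r: "r \<in> {0<..<1}"
  shows "(A u r)\<^sup>2 \<le> (17 + 8 * (4/c)^(2*m) + (4 * 4^m + 18 * (9 * 4^m + 520)^m) / c^(2*m)) * q"
proof -
  define C0 where "C0 = 8 * (4/c)^(2*m)"
  define C1 where "C1 = (4 * 4^m + 18 * (9 * 4^m + 520)^m) / c^(2*m)"
  have "0 \<le> C0 * q" "0 \<le> C1 * q"
    using c \<open>0 \<le> q\<close> by (simp_all add: C0_def C1_def)
  moreover have "(17 + C0 + C1) * q = 17 * q + C0 * q + C1 * q"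
    by (simp add: distrib_right)
  moreover consider "r \<le> 1/2" "even k" | "r \<le> 1/2" "odd k" | "1/2 \<le> r"
    by fastforce
  then have "(A u r)\<^sup>2 \<le> 17 * q \<or> (A u r)\<^sup>2 \<le> 4 * q + C0 * q \<or> (A u r)\<^sup>2 \<le> C1 * q"
  proof cases
    case 1
    have "(A u r)\<^sup>2 \<le> 17 * q"
    proof (rule Pclass_sq_le_near_0_even[OF u A 1(2) \<open>0 \<le> q\<close>])
      show "0 < r" using r by simp
    qed (fact T1 1(1))+
    then show ?thesis ..
  next
    case 2
    have "(A u r)\<^sup>2 \<le> (4 + 8 * (4/c)^(2*m)) * q"
    proof (rule Pclass_sq_le_near_0_odd[OF u A 2(2) \<open>0 \<le> q\<close> c w])
      show "(\<integral>\<^sup>+x. indicator {1/4..1} x * ennreal ((w x)^(2*m) * (A u x)\<^sup>2) \<partial>lborel) \<le> ennreal q"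
        using T2[of 0 A] A by simp
      show "0 < r" using r by simp
    qed (fact T1 2(1) | simp)+
    then show ?thesis
      by (simp add: C0_def distrib_right)
  next
    case 3
    have "(A u r)\<^sup>2 \<le> (4 * 4^m + 18 * (9 * 4^m + 520)^m) * (q / c^(2*m))"
    proof (rule Pclass_sq_le_near_1[OF u A c w \<open>0 \<le> q\<close> _ 3])
      show "(\<integral>\<^sup>+x. indicator {1/4..1} x * ennreal ((w x)^(2*m) * (B u x)\<^sup>2) \<partial>lborel) \<le> ennreal q"
        if "j \<le> m + 1" "B \<in> Pclass (j + k)" for j B
        using that by (intro T2) auto
      show "r < 1" using r by simp
    qed
    then show ?thesis
      by (simp add: C1_def)
  qed
  ultimately show ?thesis
    using \<open>0 \<le> q\<close> unfolding C0_def[symmetric] C1_def[symmetric] by (elim disjE) linarith+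
qed


lemma SUP_abs_sq_le:
  fixes f :: "real \<Rightarrow> real"
  assumes "\<And>r. r \<in> S \<Longrightarrow> (f r)\<^sup>2 \<le> C * q" "0 \<le> C" "0 \<le> q"
  shows "(SUP r\<in>S. ennreal \<bar>f r\<bar>) ^ 2 \<le> ennreal C * ennreal q"
proof -
  have "(SUP r\<in>S. ennreal \<bar>f r\<bar>) \<le> ennreal (sqrt (C * q))"
    using assms(1) by (intro SUP_least ennreal_leI real_le_rsqrt) simp
  then have "(SUP r\<in>S. ennreal \<bar>f r\<bar>) ^ 2 \<le> ennreal (sqrt (C * q)) ^ 2"
    by (intro power_mono) auto
  also have "\<dots> = ennreal C * ennreal q"
    using assms(2,3) by (simp add: ennreal_power ennreal_mult)
  finally show ?thesis .
qed

lemma le_sum_Pclass: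
  fixes f :: "nat \<Rightarrow> ((real \<Rightarrow> real) \<Rightarrow> real \<Rightarrow> real) \<Rightarrow> ennreal"
  assumes "finite J" "j \<in> J" "B \<in> Pclass (j + k)"
  shows "f j B \<le> (\<Sum>j\<in>J. \<Sum>B\<in>Pclass (j + k). f j B)"
proof -
  have "f j B \<le> (\<Sum>B\<in>Pclass (j + k). f j B)"
    using assms(3) by (rule member_le_sum) (simp_all add: finite_Pclass)
  also have "\<dots> \<le> (\<Sum>j\<in>J. \<Sum>B\<in>Pclass (j + k). f j B)"
    using assms(2) by (rule member_le_sum) (simp_all add: assms(1))
  finally show ?thesis .
qed

lemma Pclass_sup_le_sums:
  fixes u w :: "real \<Rightarrow> real"
  assumes c: "0 < c" and w: "\<And>x. x \<in> {1/4..1} \<Longrightarrow> c * (1 - x) \<le> w x"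
    and "smooth_on {0..1} u" and A: "A \<in> Pclass k"
  shows "(SUP r\<in>{0<..<1}. ennreal \<bar>A u r\<bar>) ^ 2
     \<le> ennreal (17 + 8 * (4/c)^(2*m) + (4 * 4^m + 18 * (9 * 4^m + 520)^m) / c^(2*m)) *
       ((\<Sum>j\<in>{1..2::nat}. \<Sum>B\<in>Pclass (j + k).
           \<integral>\<^sup>+ r. indicator {0..3/4} r * ennreal ((B u r)\<^sup>2 * r\<^sup>2) \<partial>lborel)
        + (\<Sum>j\<in>{0..m+1}. \<Sum>B\<in>Pclass (j + k).
           \<integral>\<^sup>+ r. indicator {1/4..1} r * ennreal ((w r)^(2*m) * (B u r)\<^sup>2) \<partial>lborel))"
    (is "_ \<le> ennreal ?C * (?S1 + ?S2)")
proof -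
  have u: "deriv_smooth {0<..<1} u"
    using \<open>smooth_on {0..1} u\<close> by (rule smooth_on_imp_deriv_smooth)
  have "0 \<le> ?C"
    using c by simp
  show ?thesis
  proof (cases "?S1 + ?S2 = \<infinity>")
    case True
    have "ennreal ?C * (?S1 + ?S2) = \<infinity>"
      using c unfolding True by (simp add: ennreal_mult_top add_pos_nonneg)
    then show ?thesis
      by simp
  next
    case False
    then obtain q where q: "?S1 + ?S2 = ennreal q" "0 \<le> q"
      by (cases "?S1 + ?S2") auto
    have "(A u r)\<^sup>2 \<le> ?C * q" if "r \<in> {0<..<1}" for r
    proof (rule Pclass_sq_le[OF u A q(2) c w _ _ that])
      show "(\<integral>\<^sup>+x. indicator {0..3/4} x * ennreal ((B u x)\<^sup>2 * x\<^sup>2) \<partial>lborel) \<le> ennreal q"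
        if "j \<in> {1..2}" "B \<in> Pclass (j + k)" for j B
      proof -
        have "(\<integral>\<^sup>+x. indicator {0..3/4} x * ennreal ((B u x)\<^sup>2 * x\<^sup>2) \<partial>lborel) \<le> ?S1"
          by (rule le_sum_Pclass) (use that in auto)
        then show ?thesis
          unfolding q(1)[symmetric] by (rule order_trans) simp
      qed
      show "(\<integral>\<^sup>+x. indicator {1/4..1} x * ennreal ((w x)^(2*m) * (B u x)\<^sup>2) \<partial>lborel) \<le> ennreal q"
        if "j \<in> {0..m+1}" "B \<in> Pclass (j + k)" for j B
      proof -
        have "(\<integral>\<^sup>+x. indicator {1/4..1} x * ennreal ((w x)^(2*m) * (B u x)\<^sup>2) \<partial>lborel) \<le> ?S2"
          by (rule le_sum_Pclass) (use that in auto)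
        then show ?thesis
          unfolding q(1)[symmetric] by (rule order_trans) simp
      qed
    qed
    then show ?thesis
      unfolding q(1) using \<open>0 \<le> ?C\<close> q(2) by (intro SUP_abs_sq_le) auto
  qed
qed

lemma Pclass_sup_estimate:
  fixes w :: "real \<Rightarrow> real"
  assumes "\<exists>c>0. \<forall>x\<in>{1/4..1}. c * (1 - x) \<le> w x"
  shows "\<exists>C>0. \<forall>u. smooth_on {0..1} u \<longrightarrow> (\<forall>A\<in>Pclass k.
     (SUP r\<in>{0<..<1}. ennreal \<bar>A u r\<bar>) ^ 2
     \<le> ennreal C *
       ((\<Sum>j\<in>{1..2::nat}. \<Sum>B\<in>Pclass (j + k).
           \<integral>\<^sup>+ r. indicator {0..3/4} r * ennreal ((B u r)\<^sup>2 * r\<^sup>2) \<partial>lborel)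
        + (\<Sum>j\<in>{0..m+1}. \<Sum>B\<in>Pclass (j + k).
           \<integral>\<^sup>+ r. indicator {1/4..1} r * ennreal ((w r)^(2*m) * (B u r)\<^sup>2) \<partial>lborel)))"
proof -
  obtain c where c: "0 < c" and w: "\<And>x. x \<in> {1/4..1} \<Longrightarrow> c * (1 - x) \<le> w x"
    using assms by blast
  have "0 < 17 + 8 * (4/c)^(2*m) + (4 * 4^m + 18 * (9 * 4^m + 520)^m) / c^(2*m)"
    using c by (simp add: add_pos_nonneg)
  then show ?thesis
    using Pclass_sup_le_sums[OF c w] by blast
qed

theorem corollaryB1:
  shows "\<exists>N::nat. \<forall>(\<phi>::real \<Rightarrow> real) (\<gamma>::real).
     Ck_on N {0..1} \<phi> \<and> (\<forall>r\<in>{0..1}. \<phi> r > 0) \<and>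
     (\<phi> has_real_derivative 0) (at 0 within {0..1}) \<and> \<gamma> > 1 \<longrightarrow>
     (\<forall>m::nat. m \<ge> 1 \<longrightarrow> (\<forall>k::nat. k \<ge> 1 \<longrightarrow>
       (\<exists>C::real. C > 0 \<and>
         (\<forall>u::real \<Rightarrow> real. smooth_on {0..1} u \<longrightarrow>
           (\<forall>A\<in>Pclass k.
              (SUP r\<in>{0<..<1}. ennreal \<bar>A u r\<bar>) ^ 2
              \<le> ennreal C *
                ((\<Sum>j\<in>{1..2::nat}. \<Sum>B\<in>Pclass (j + k).
                    \<integral>\<^sup>+ r. indicator {0..3/4} r * ennreal ((B u r)\<^sup>2 * r\<^sup>2) \<partial>lborel)
                 + (\<Sum>j\<in>{0..m+1}. \<Sum>B\<in>Pclass (j + k).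
                    \<integral>\<^sup>+ r. indicator {1/4..1} r *
                        ennreal ((dfun \<phi> \<gamma> r) ^ (2*m) * (B u r)\<^sup>2) \<partial>lborel)))))))"
proof (intro exI[of _ "0::nat"] allI impI Pclass_sup_estimate)
  fix \<phi> :: "real \<Rightarrow> real" and \<gamma> :: real
  assume "Ck_on 0 {0..1} \<phi> \<and> (\<forall>r\<in>{0..1}. \<phi> r > 0) \<and>
    (\<phi> has_real_derivative 0) (at 0 within {0..1}) \<and> \<gamma> > 1"
  then show "\<exists>c>0. \<forall>x\<in>{1/4..1}. c * (1 - x) \<le> dfun \<phi> \<gamma> x"
    by (intro dfun_ge_linear) (auto simp: Ck_on_def)
qed

end
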